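(* In Ruleset C, for a superposition of $\ell$ distinct single Nim heaps with $k=\max_{1\le j\le\ell} i_j$, \[\langle \mathrm{Nim}(i_1),\ldots,\mathrm{Nim}(i_\ell)\rangle_C\equiv\begin{cases} *k & \text{if } \ell=1,\\ *(k-1) & \text{otherwise.}\end{cases}\]
   Context: Single-heap Nim: $\mathrm{Nim}(x)$ is a heap of $x$ tokens; classical move $(1,-j)$, $j\ge1$, removes $j$ tokens and is illegal if fewer than $j$ tokens remain. Quantum variation: a position is a nonempty finite set $\langle G_1,\ldots,G_n\rangle$ of distinct classical positions; a classical move is legal if legal in some $G_i$; a Q-move is a nonempty set of legal classical moves, leading to the superposition (set) of all legal results of applying one of its moves to one of the $G_i$. Ruleset C (subscript $C$): Q-moves of at least two distinct classical moves are allowed; an unsuperposed (single) move is allowed if and only if it is legal in every $G_i$ of the superposition. The player with no allowed Q-move loses. $\equiv$ is game equivalence, $*k$ the value of a classical Nim heap of $k$ tokens. *)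

theory Defs
  imports Main
begin

text \<open>Second-player-win (P-) positions, as least fixed point: a position is a
  P-position if every move leads to a position from which some move reaches
  a P-position.  For terminating games this is the usual notion.\<close>
inductive plose :: "('a \<Rightarrow> 'a set) \<Rightarrow> 'a \<Rightarrow> bool" for mv where
  "(\<forall>y\<in>mv x. \<exists>z\<in>mv y. plose mv z) \<Longrightarrow> plose mv x"

definition gsum :: "('a \<Rightarrow> 'a set) \<Rightarrow> ('b \<Rightarrow> 'b set) \<Rightarrow> 'a \<times> 'b \<Rightarrow> ('a \<times> 'b) set" where
  "gsum mv1 mv2 p = (\<lambda>x'. (x', snd p)) ` mv1 (fst p) \<union> (\<lambda>y'. (fst p, y')) ` mv2 (snd p)"

definition game_equiv :: "('a \<Rightarrow> 'a set) \<Rightarrow> 'a \<Rightarrow> ('b \<Rightarrow> 'b set) \<Rightarrow> 'b \<Rightarrow> bool" where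
  "game_equiv mv1 x mv2 y \<longleftrightarrow> plose (gsum mv1 mv2) (x, y)"

text \<open>Classical Nim heap: the value *k is the position k with moves to any smaller heap.\<close>
definition nim_moves :: "nat \<Rightarrow> nat set" where
  "nim_moves k = {..<k}"

text \<open>A position is a nonempty finite set
  of heap sizes (distinct classical positions).  A Q-move is a nonempty set M of
  classical moves j (removing j \<ge> 1 tokens), each legal in some heap; it is allowed
  if it contains at least two distinct moves, or if it is a single move legal in
  every heap.\<close>
definition qmove_result :: "nat set \<Rightarrow> nat set \<Rightarrow> nat set" where
  "qmove_result S M = {g - j | g j. g \<in> S \<and> j \<in> M \<and> 1 \<le> j \<and> j \<le> g}"

definition qmovesC :: "nat set \<Rightarrow> nat set set" where
  "qmovesC S = {qmove_result S M | M.
      M \<noteq> {} \<and> (\<forall>j\<in>M. 1 \<le> j \<and> (\<exists>g\<in>S. j \<le> g)) \<and>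
      (2 \<le> card M \<or> (\<exists>j. M = {j} \<and> (\<forall>g\<in>S. j \<le> g)))}"

end

theory Submission
  imports Defs
begin

text \<open>A game whose positions carry a value \<open>val\<close> that every move changes and that
  every move can lower to any smaller number behaves like the Nim heap of that value:
  a move of the sum to a position with mismatched values is answered by restoring
  the match, either on the Nim heap or, if the game's value overshoots, by one more
  move of the game.  For Ruleset C the value of \<open>S\<close> is \<open>Max S\<close> on a single heap and
  \<open>Max S - 1\<close> otherwise: a superposition of several heaps can only move to
  superpositions of several heaps below \<open>Max S\<close>, and the two moves \<open>Max S - m - 1\<close>
  and \<open>Max S - m\<close> produce a superposition with maximum \<open>m + 1\<close>.\<close>

lemma plose_gsum_nim_value:
  fixes mv :: "'a \<Rightarrow> 'a set" and val rank :: "'a \<Rightarrow> nat"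
  assumes closed: "\<And>x y. I x \<Longrightarrow> y \<in> mv x \<Longrightarrow> I y"
    and rank_less: "\<And>x y. I x \<Longrightarrow> y \<in> mv x \<Longrightarrow> rank y < rank x"
    and val_changes: "\<And>x y. I x \<Longrightarrow> y \<in> mv x \<Longrightarrow> val y \<noteq> val x"
    and val_lowers: "\<And>x m. I x \<Longrightarrow> m < val x \<Longrightarrow> \<exists>y\<in>mv x. val y = m"
    and "I x"
  shows "plose (gsum mv nim_moves) (x, val x)"
proof -
  have "plose (gsum mv nim_moves) (x, val x)" if "I x" "rank x + val x = N" for N x
    using that
  proof (induction N arbitrary: x rule: less_induct)
    case (less N x)
    let ?P = "plose (gsum mv nim_moves)"
    have P_le: "?P (y, val y)" if "I y" "rank y + val y < N" for y
      using less.IH that by blast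
    show ?case
    proof (rule plose.intros, rule ballI)
      fix p assume "p \<in> gsum mv nim_moves (x, val x)"
      then consider (game) y where "p = (y, val x)" "y \<in> mv x"
        | (heap) m where "p = (x, m)" "m < val x"
        unfolding gsum_def nim_moves_def by auto
      then show "\<exists>q\<in>gsum mv nim_moves p. ?P q"
      proof cases
        case game
        have "I y" "rank y < rank x" using closed rank_less less.prems(1) game(2) by auto
        consider (lower) "val y < val x" | (higher) "val x < val y"
          using val_changes less.prems(1) game(2) by fastforce
        then show ?thesis
        proof cases
          case lower
          then have "?P (y, val y)" using P_le \<open>I y\<close> \<open>rank y < rank x\<close> less.prems(2) by simp
          moreover have "(y, val y) \<in> gsum mv nim_moves p"
            using game(1) lower by (simp add: gsum_def nim_moves_def)
          ultimately show ?thesis by blast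
        next
          case higher
          then obtain z where z: "z \<in> mv y" "val z = val x" using val_lowers \<open>I y\<close> by blast
          have "rank z < rank y" using rank_less \<open>I y\<close> z(1) by blast
          moreover have "I z" using closed \<open>I y\<close> z(1) by blast
          moreover have "rank z + val z < N"
            using \<open>rank z < rank y\<close> \<open>rank y < rank x\<close> z(2) less.prems(2) by linarith
          ultimately have "?P (z, val z)" using P_le by blast
          moreover have "(z, val z) \<in> gsum mv nim_moves p"
            using game(1) z by (simp add: gsum_def)
          ultimately show ?thesis by blast
        qed
      next
        case heap
        obtain y where y: "y \<in> mv x" "val y = m" using val_lowers less.prems(1) heap(2) by blast
        have "?P (y, val y)"
          using P_le closed rank_less less.prems y heap(2) by fastforce
        moreover have "(y, val y) \<in> gsum mv nim_moves p"
          using heap(1) y by (simp add: gsum_def)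
        ultimately show ?thesis by blast
      qed
    qed
  qed
  then show ?thesis using \<open>I x\<close> by blast
qed

lemma qmove_result_memI: "g \<in> S \<Longrightarrow> j \<in> M \<Longrightarrow> 1 \<le> j \<Longrightarrow> j \<le> g \<Longrightarrow> g - j \<in> qmove_result S M"
  unfolding qmove_result_def by blast

lemma qmove_result_less_Max: "finite S \<Longrightarrow> t \<in> qmove_result S M \<Longrightarrow> t < Max S"
  unfolding qmove_result_def by (fastforce dest: Max_ge)

lemma finite_qmove_result: "finite S \<Longrightarrow> finite (qmove_result S M)"
  by (meson finite_lessThan finite_subset lessThan_iff qmove_result_less_Max subsetI)

lemma qmovesC_E:
  assumes "T \<in> qmovesC S"
  obtains M where "T = qmove_result S M" "M \<noteq> {}" "\<forall>j\<in>M. 1 \<le> j \<and> (\<exists>g\<in>S. j \<le> g)"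
    "2 \<le> card M \<or> (\<exists>j. M = {j} \<and> (\<forall>g\<in>S. j \<le> g))"
  using assms unfolding qmovesC_def by blast

lemma qmovesC_nonempty: "T \<in> qmovesC S \<Longrightarrow> T \<noteq> {}"
  by (erule qmovesC_E) (use qmove_result_memI in blast)

lemma finite_qmovesC: "finite S \<Longrightarrow> T \<in> qmovesC S \<Longrightarrow> finite T"
  by (metis finite_qmove_result qmovesC_E)

lemma qmovesC_Max_less: "finite S \<Longrightarrow> T \<in> qmovesC S \<Longrightarrow> Max T < Max S"
  by (metis Max_in finite_qmovesC qmovesC_nonempty qmove_result_less_Max qmovesC_E)

lemma qmovesC_not_singleton:
  assumes "finite S" "card S \<noteq> 1" "T \<in> qmovesC S"
  shows "\<exists>a\<in>T. \<exists>b\<in>T. a \<noteq> b"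
proof -
  obtain M where M: "T = qmove_result S M" "M \<noteq> {}" "\<forall>j\<in>M. 1 \<le> j \<and> (\<exists>g\<in>S. j \<le> g)"
    "2 \<le> card M \<or> (\<exists>j. M = {j} \<and> (\<forall>g\<in>S. j \<le> g))"
    using assms(3) by (rule qmovesC_E)
  have "S \<noteq> {}" using M(2,3) by blast
  let ?k = "Max S"
  have k: "?k \<in> S" using assms(1) \<open>S \<noteq> {}\<close> by simp
  have j_le_k: "1 \<le> j \<and> j \<le> ?k" if "j \<in> M" for j
    using M(3) that assms(1) by (meson Max_ge order.trans)
  show ?thesis
  proof (cases "2 \<le> card M")
    case True
    then have "finite M" "\<not> card M \<le> Suc 0" by (auto intro: card_ge_0_finite)
    then obtain a b where ab: "a \<in> M" "b \<in> M" "a \<noteq> b" by (auto simp: card_le_Suc0_iff_eq)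
    have "?k - a \<in> T" "?k - b \<in> T"
      using qmove_result_memI[OF k] ab j_le_k M(1) by auto
    moreover have "?k - a \<noteq> ?k - b" using j_le_k[OF ab(1)] j_le_k[OF ab(2)] ab(3) by linarith
    ultimately show ?thesis by blast
  next
    case False
    then obtain j where j: "M = {j}" "\<forall>g\<in>S. j \<le> g" using M(4) by blast
    have "S \<noteq> {?k}" using assms(2) by (metis is_singletonI is_singleton_altdef)
    then obtain s where s: "s \<in> S" "s \<noteq> ?k" using k by blast
    have "s < ?k" using s assms(1) by (simp add: order.not_eq_order_implies_strict)
    have "?k - j \<in> T" "s - j \<in> T"
      using qmove_result_memI[OF k] qmove_result_memI[OF s(1)] j j_le_k M(1) s(1) by auto
    moreover have "?k - j \<noteq> s - j" using \<open>s < ?k\<close> j(2) s(1) by fastforce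
    ultimately show ?thesis by blast
  qed
qed

definition qnimC_value :: "nat set \<Rightarrow> nat" where
  "qnimC_value S = (if card S = 1 then Max S else Max S - 1)"

lemma qnimC_value_changes:
  assumes "finite S" "T \<in> qmovesC S"
  shows "qnimC_value T \<noteq> qnimC_value S"
proof -
  have "finite T" using finite_qmovesC assms by blast
  have Max_less: "Max T < Max S" using qmovesC_Max_less assms by blast
  show ?thesis
  proof (cases "card S = 1")
    case True
    have "qnimC_value T \<le> Max T" by (simp add: qnimC_value_def)
    then show ?thesis using True Max_less by (simp add: qnimC_value_def)
  next
    case False
    then obtain a b where "a \<in> T" "b \<in> T" "a \<noteq> b"
      using qmovesC_not_singleton assms by blast
    moreover have "a \<le> Max T" "b \<le> Max T" using \<open>finite T\<close> \<open>a \<in> T\<close> \<open>b \<in> T\<close> by simp_all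
    ultimately have "card T \<noteq> 1" "1 \<le> Max T" by (auto simp: card_1_singleton_iff)
    then show ?thesis using False Max_less by (simp add: qnimC_value_def)
  qed
qed

lemma qnimC_value_lowers:
  assumes "finite S" "S \<noteq> {}" "m < qnimC_value S"
  shows "\<exists>T\<in>qmovesC S. qnimC_value T = m"
proof (cases "card S = 1")
  case True
  then obtain g where S: "S = {g}" by (rule card_1_singletonE)
  have "m < g" using assms(3) S by (simp add: qnimC_value_def)
  then have "qmove_result S {g - m} = {m}"
    unfolding S qmove_result_def by auto
  moreover have "qmove_result S {g - m} \<in> qmovesC S"
    unfolding qmovesC_def using \<open>m < g\<close> S by (intro CollectI exI[of _ "{g - m}"]) auto
  ultimately show ?thesis by (metis qnimC_value_def is_singletonI is_singleton_altdef Max_singleton)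
next
  case False
  let ?k = "Max S"
  have k: "?k \<in> S" using assms by simp
  have m: "m + 1 < ?k" using assms(3) False by (simp add: qnimC_value_def)
  define M where "M = {?k - m - 1, ?k - m}"
  define T where "T = qmove_result S M"
  have "m \<in> T" "m + 1 \<in> T"
    using qmove_result_memI[OF k, of "?k - m" M] qmove_result_memI[OF k, of "?k - m - 1" M] m
    unfolding T_def M_def by auto
  moreover have "t \<le> m + 1" if "t \<in> T" for t
  proof -
    obtain g j where "t = g - j" "g \<in> S" "j \<in> M"
      using \<open>t \<in> T\<close> unfolding T_def qmove_result_def by blast
    moreover have "g \<le> ?k" using \<open>g \<in> S\<close> assms(1) by simp
    ultimately show ?thesis using m unfolding M_def by auto
  qed
  moreover have "finite T" using finite_qmove_result assms(1) T_def by blast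
  ultimately have "Max T = m + 1" "card T \<noteq> 1"
    by (auto intro: Max_eqI simp: card_1_singleton_iff)
  then have "qnimC_value T = m" by (simp add: qnimC_value_def)
  moreover have "T \<in> qmovesC S"
    unfolding T_def qmovesC_def using m k
    by (intro CollectI exI[of _ M]) (auto simp: M_def intro!: bexI[of _ ?k])
  ultimately show ?thesis by blast
qed

theorem lemma4:
  fixes S :: "nat set" and k :: nat
  assumes "finite S" and "S \<noteq> {}" and "k = Max S"
  shows "game_equiv qmovesC S nim_moves (if card S = 1 then k else k - 1)"
proof -
  have "plose (gsum qmovesC nim_moves) (S, qnimC_value S)"
    using assms(1,2) finite_qmovesC qmovesC_nonempty qmovesC_Max_less
      qnimC_value_changes qnimC_value_lowers
    by (intro plose_gsum_nim_value[where I = "\<lambda>S. finite S \<and> S \<noteq> {}" and rank = Max]) auto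
  then show ?thesis unfolding game_equiv_def qnimC_value_def assms(3) .
qed

end
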